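(* Let $\mathcal{T},\mathcal{U},\mathcal{B}$ be tile sets with mutually consistent frequencies and let $U\in\mathcal{U}$. Then \[ d(\mathcal{T}\cup\{U\},\mathcal{U};\mathcal{B})\le d(\mathcal{T},\mathcal{U};\mathcal{B}). \]
   Context: Fix $n,m\ge1$; $\mathcal{D}$ is the set of $n\times m$ binary matrices. A tile is $T=(t(T),a(T))$ with nonempty $t(T)\subseteq\{1..n\}$, $a(T)\subseteq\{1..m\}$, $\mathrm{area}(T)=t(T)\times a(T)$. $\mathrm{fr}(T;D)=\frac1{|\mathrm{area}(T)|}\sum_{(i,j)\in\mathrm{area}(T)}D(i,j)$, $\mathrm{fr}(T;p)=\sum_Dp(D)\mathrm{fr}(T;D)$. Each tile carries a target frequency $\alpha_T$; tile sets are consistent if some distribution on $\mathcal{D}$ attains all target frequencies simultaneously. For a tile set $\mathcal{T}$, $p^*_{\mathcal{T}}$ is the entropy-maximising distribution among those with $\mathrm{fr}(T;p)=\alpha_T$ for all $T\in\mathcal{T}$. $\mathrm{KL}(\mathcal{T}\|\mathcal{U})=\mathrm{KL}(p^*_{\mathcal{T}}\|p^*_{\mathcal{U}})$. With $\mathcal{M}=\mathcal{T}\cup\mathcal{U}\cup\mathcal{B}$, $d(\mathcal{T},\mathcal{U};\mathcal{B})=\frac{\mathrm{KL}(\mathcal{M}\|\mathcal{U}\cup\mathcal{B})+\mathrm{KL}(\mathcal{M}\|\mathcal{T}\cup\mathcal{B})}{\mathrm{KL}(\mathcal{M}\|\mathcal{B})}$, defined as $1$ if $\mathrm{KL}(\mathcal{M}\|\mathcal{B})=0$.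 *)

theory Defs
  imports Complex_Main
begin

text \<open>A binary n x m matrix is represented by the set of its 1-entries, a subset of
  {1..n} x {1..m}.  The set of all such matrices is D.\<close>

type_synonym matrix = "(nat \<times> nat) set"

definition matrices :: "nat \<Rightarrow> nat \<Rightarrow> matrix set" where
  "matrices n m = Pow ({1..n} \<times> {1..m})"

text \<open>A tile is a pair (t(T), a(T)) of row and column sets.\<close>

type_synonym tile = "nat set \<times> nat set"

definition is_tile :: "nat \<Rightarrow> nat \<Rightarrow> tile \<Rightarrow> bool" where
  "is_tile n m T \<longleftrightarrow> fst T \<noteq> {} \<and> fst T \<subseteq> {1..n} \<and> snd T \<noteq> {} \<and> snd T \<subseteq> {1..m}"

definition area :: "tile \<Rightarrow> (nat \<times> nat) set" where
  "area T = fst T \<times> snd T"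

definition fr_mat :: "tile \<Rightarrow> matrix \<Rightarrow> real" where
  "fr_mat T D = (\<Sum>c\<in>area T. if c \<in> D then 1 else 0) / real (card (area T))"

definition is_distr :: "nat \<Rightarrow> nat \<Rightarrow> (matrix \<Rightarrow> real) \<Rightarrow> bool" where
  "is_distr n m p \<longleftrightarrow> (\<forall>D\<in>matrices n m. 0 \<le> p D) \<and> (\<forall>D. D \<notin> matrices n m \<longrightarrow> p D = 0)
      \<and> (\<Sum>D\<in>matrices n m. p D) = 1"

definition fr_distr :: "nat \<Rightarrow> nat \<Rightarrow> tile \<Rightarrow> (matrix \<Rightarrow> real) \<Rightarrow> real" where
  "fr_distr n m T p = (\<Sum>D\<in>matrices n m. p D * fr_mat T D)"

definition feasible :: "nat \<Rightarrow> nat \<Rightarrow> (tile \<Rightarrow> real) \<Rightarrow> tile set \<Rightarrow> (matrix \<Rightarrow> real) \<Rightarrow> bool" where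
  "feasible n m alpha TS p \<longleftrightarrow> is_distr n m p \<and> (\<forall>T\<in>TS. fr_distr n m T p = alpha T)"

definition consistent :: "nat \<Rightarrow> nat \<Rightarrow> (tile \<Rightarrow> real) \<Rightarrow> tile set \<Rightarrow> bool" where
  "consistent n m alpha TS \<longleftrightarrow> (\<exists>p. feasible n m alpha TS p)"

text \<open>Shannon entropy (natural log; convention 0 ln 0 = 0 holds since ln 0 = 0).\<close>

definition entropy :: "nat \<Rightarrow> nat \<Rightarrow> (matrix \<Rightarrow> real) \<Rightarrow> real" where
  "entropy n m p = - (\<Sum>D\<in>matrices n m. p D * ln (p D))"

definition maxent :: "nat \<Rightarrow> nat \<Rightarrow> (tile \<Rightarrow> real) \<Rightarrow> tile set \<Rightarrow> (matrix \<Rightarrow> real)" where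
  "maxent n m alpha TS = (THE p. feasible n m alpha TS p \<and>
      (\<forall>q. feasible n m alpha TS q \<longrightarrow> entropy n m q \<le> entropy n m p))"

text \<open>KL divergence (natural log). Terms with p D = 0 contribute 0.\<close>

definition KL :: "nat \<Rightarrow> nat \<Rightarrow> (matrix \<Rightarrow> real) \<Rightarrow> (matrix \<Rightarrow> real) \<Rightarrow> real" where
  "KL n m p q = (\<Sum>D\<in>matrices n m. p D * ln (p D / q D))"

definition KL_tiles :: "nat \<Rightarrow> nat \<Rightarrow> (tile \<Rightarrow> real) \<Rightarrow> tile set \<Rightarrow> tile set \<Rightarrow> real" where
  "KL_tiles n m alpha TS US = KL n m (maxent n m alpha TS) (maxent n m alpha US)"

definition dist_d :: "nat \<Rightarrow> nat \<Rightarrow> (tile \<Rightarrow> real) \<Rightarrow> tile set \<Rightarrow> tile set \<Rightarrow> tile set \<Rightarrow> real" where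
  "dist_d n m alpha TS US BS =
    (let MS = TS \<union> US \<union> BS in
     if KL_tiles n m alpha MS BS = 0 then 1
     else (KL_tiles n m alpha MS (US \<union> BS) + KL_tiles n m alpha MS (TS \<union> BS))
          / KL_tiles n m alpha MS BS)"

end

theory Submission
  imports Defs "HOL-Analysis.Analysis" "HOL-Real_Asymp.Real_Asymp"
begin

text \<open>The feasible distributions for a tile set X form a compact convex set on which the entropy
  is continuous, so a maximum-entropy distribution p*(X) exists.  It has maximal support among
  feasible distributions (moving towards a feasible s that charges a point where p*(X) vanishes
  gains entropy of order -t ln t), so first-order optimality gives
  \<open>\<Sum> s ln p*(X) = \<Sum> p*(X) ln p*(X)\<close> for every feasible s; this yields uniqueness and, for
  X \<subseteq> M, the Pythagorean identity KL(p*(M) \<parallel> p*(X)) = H(p*(X)) - H(p*(M)).  Hence KL(M \<parallel> X)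
  decreases as X grows inside M.  Adding U \<in> US to TS leaves M = TS \<union> US \<union> BS, the denominator
  and KL(M \<parallel> US \<union> BS) unchanged, and can only decrease KL(M \<parallel> TS \<union> BS).\<close>

lemma xlnx_tangent_le:
  fixes x y :: real
  assumes "x > 0" "y \<ge> 0"
  shows "y * ln x + y - x \<le> y * ln y"
proof (cases "y = 0")
  case False
  with assms have y: "y > 0" by simp
  have "ln (x / y) \<le> x / y - 1" using ln_le_minus_one assms y by simp
  then have "y * (ln x - ln y) \<le> y * (x / y - 1)"
    using assms y by (simp add: ln_div mult_left_mono)
  then show ?thesis using y by (simp add: algebra_simps)
qed (use assms in simp)

text \<open>Convexity of x ln x, except that a segment leaving the point 0 picks up the extra
  term \<open>t b ln t\<close>, which is negative of larger order than t.\<close>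

lemma xlnx_segment_le:
  fixes a b t :: real
  assumes a: "0 \<le> a" and b: "0 \<le> b" and t: "0 < t" "t < 1"
  shows "(a + t * (b - a)) * ln (a + t * (b - a))
    \<le> (1 - t) * (a * ln a) + t * (b * ln b) + (if a = 0 then t * b * ln t else 0)"
proof (cases "a = 0")
  case True
  then show ?thesis using b t by (cases "b = 0") (simp_all add: ln_mult algebra_simps)
next
  case False
  define c where "c = a + t * (b - a)"
  have c_eq: "c = (1 - t) * a + t * b" unfolding c_def by (simp add: algebra_simps)
  have "c > 0" unfolding c_eq using False a b t
    by (smt (verit) mult_nonneg_nonneg mult_pos_pos)
  then have "a * ln c + a - c \<le> a * ln a" "b * ln c + b - c \<le> b * ln b"
    using xlnx_tangent_le a b by auto
  then have "(1 - t) * (a * ln c + a - c) + t * (b * ln c + b - c)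
      \<le> (1 - t) * (a * ln a) + t * (b * ln b)"
    using t by (intro add_mono mult_left_mono) auto
  moreover have "(1 - t) * (a * ln c + a - c) + t * (b * ln c + b - c) = c * ln c"
    unfolding c_eq by (simp add: algebra_simps)
  ultimately show ?thesis using False by (simp add: c_def)
qed

lemma continuous_on_xlnx: "continuous_on {0..} (\<lambda>x::real. x * ln x)"
proof -
  have "continuous (at x within {0..}) (\<lambda>x::real. x * ln x)" if "x \<ge> 0" for x
  proof (cases "x = 0")
    case True
    have "((\<lambda>x::real. x * ln x) \<longlongrightarrow> 0) (at_right 0)" by real_asymp
    then show ?thesis using True by (simp add: continuous_within at_within_Ici_at_right)
  next
    case False
    with that have "isCont (\<lambda>x::real. x * ln x) x" by (intro continuous_intros) auto
    then show ?thesis using continuous_at_imp_continuous_at_within by blast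
  qed
  then show ?thesis by (simp add: continuous_on_eq_continuous_within)
qed

lemma xlnx_line_has_real_derivative:
  fixes a c :: real
  assumes "0 < a \<or> c = 0"
  shows "((\<lambda>t. (a + t * c) * ln (a + t * c)) has_real_derivative (ln a + 1) * c) (at 0)"
proof (cases "c = 0")
  case False
  with assms show ?thesis by (auto intro!: derivative_eq_intros simp: field_simps)
qed simp

lemma diff_mult_ln_diff_pos:
  fixes x y :: real
  assumes "0 < x" "0 < y" "x \<noteq> y"
  shows "0 < (x - y) * (ln x - ln y)"
  using assms by (cases "x < y") (auto intro: mult_neg_neg mult_pos_pos)

lemma small_perturbation_nonneg:
  fixes q s :: "'a \<Rightarrow> real"
  assumes "finite S" and q: "\<forall>x\<in>S. 0 \<le> q x" and s: "\<forall>x\<in>S. q x = 0 \<longrightarrow> s x = 0"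
  obtains \<delta> where "\<delta> > 0" "\<And>t x. \<bar>t\<bar> < \<delta> \<Longrightarrow> x \<in> S \<Longrightarrow> 0 \<le> q x + t * (s x - q x)"
proof
  define P where "P = {x\<in>S. 0 < q x}"
  define \<delta> where "\<delta> = Min (insert 1 ((\<lambda>x. q x / (\<bar>s x - q x\<bar> + 1)) ` P))"
  have "finite P" using \<open>finite S\<close> by (simp add: P_def)
  then show "\<delta> > 0" by (auto simp: \<delta>_def P_def)
  fix t x assume t: "\<bar>t\<bar> < \<delta>" and x: "x \<in> S"
  show "0 \<le> q x + t * (s x - q x)"
  proof (cases "x \<in> P")
    case True
    let ?b = "s x - q x"
    have "\<delta> \<le> q x / (\<bar>?b\<bar> + 1)" unfolding \<delta>_def using \<open>finite P\<close> True by (intro Min_le) auto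
    then have "\<delta> * (\<bar>?b\<bar> + 1) \<le> q x" by (simp add: le_divide_eq add_pos_nonneg)
    moreover have "\<bar>t\<bar> * (\<bar>?b\<bar> + 1) \<le> \<delta> * (\<bar>?b\<bar> + 1)"
      using t by (intro mult_right_mono) auto
    moreover have "\<bar>t * ?b\<bar> \<le> \<bar>t\<bar> * (\<bar>?b\<bar> + 1)" by (simp add: abs_mult mult_left_mono)
    ultimately show ?thesis by linarith
  qed (use q s x in \<open>auto simp: P_def\<close>)
qed


lemma finite_matrices: "finite (matrices n m)"
  by (simp add: matrices_def)

lemma feasible_nonneg: "feasible n m alpha X p \<Longrightarrow> D \<in> matrices n m \<Longrightarrow> 0 \<le> p D"
  by (simp add: feasible_def is_distr_def)

lemma feasible_outside: "feasible n m alpha X p \<Longrightarrow> D \<notin> matrices n m \<Longrightarrow> p D = 0"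
  by (simp add: feasible_def is_distr_def)

lemma feasible_sum: "feasible n m alpha X p \<Longrightarrow> (\<Sum>D\<in>matrices n m. p D) = 1"
  by (simp add: feasible_def is_distr_def)

lemma feasible_mono: "feasible n m alpha X p \<Longrightarrow> Y \<subseteq> X \<Longrightarrow> feasible n m alpha Y p"
  by (auto simp: feasible_def)

lemma consistent_mono: "consistent n m alpha X \<Longrightarrow> Y \<subseteq> X \<Longrightarrow> consistent n m alpha Y"
  by (auto simp: consistent_def intro: feasible_mono)

lemma feasible_affine_combination:
  assumes p: "feasible n m alpha X p" and s: "feasible n m alpha X s"
    and nonneg: "\<forall>D\<in>matrices n m. 0 \<le> p D + t * (s D - p D)"
  shows "feasible n m alpha X (\<lambda>D. p D + t * (s D - p D))"
proof -
  let ?S = "matrices n m"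
  have "(\<Sum>D\<in>?S. p D + t * (s D - p D)) = (\<Sum>D\<in>?S. p D) + t * ((\<Sum>D\<in>?S. s D) - (\<Sum>D\<in>?S. p D))"
    by (simp add: sum.distrib flip: sum_distrib_left sum_subtractf)
  moreover have "(\<Sum>D\<in>?S. (p D + t * (s D - p D)) * fr_mat T D) =
      (\<Sum>D\<in>?S. p D * fr_mat T D) + t * ((\<Sum>D\<in>?S. s D * fr_mat T D) - (\<Sum>D\<in>?S. p D * fr_mat T D))" for T
    by (simp add: sum.distrib sum_distrib_left sum_subtractf algebra_simps)
  ultimately show ?thesis using p s nonneg
    by (auto simp: feasible_def is_distr_def fr_distr_def)
qed

lemma entropy_segment_ge:
  assumes q: "\<forall>D\<in>matrices n m. 0 \<le> q D" and s: "\<forall>D\<in>matrices n m. 0 \<le> s D"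
    and t: "0 < t" "t < 1"
  shows "(1 - t) * entropy n m q + t * entropy n m s - t * ln t * (\<Sum>D\<in>{D\<in>matrices n m. q D = 0}. s D)
    \<le> entropy n m (\<lambda>D. q D + t * (s D - q D))"
proof -
  let ?S = "matrices n m"
  have "(\<Sum>D\<in>?S. (q D + t * (s D - q D)) * ln (q D + t * (s D - q D)))
      \<le> (\<Sum>D\<in>?S. (1 - t) * (q D * ln (q D)) + t * (s D * ln (s D))
            + (if q D = 0 then t * s D * ln t else 0))"
    using q s t by (intro sum_mono xlnx_segment_le) auto
  also have "\<dots> = (1 - t) * (\<Sum>D\<in>?S. q D * ln (q D)) + t * (\<Sum>D\<in>?S. s D * ln (s D))
      + t * ln t * (\<Sum>D\<in>{D\<in>?S. q D = 0}. s D)"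
    by (simp add: sum.distrib sum_distrib_left sum_distrib_right sum.inter_filter[OF finite_matrices]
        flip: sum.If_cases) (auto intro: sum.cong)
  finally show ?thesis by (simp add: entropy_def algebra_simps)
qed

definition is_maxent :: "nat \<Rightarrow> nat \<Rightarrow> (tile \<Rightarrow> real) \<Rightarrow> tile set \<Rightarrow> (matrix \<Rightarrow> real) \<Rightarrow> bool" where
  "is_maxent n m alpha X q \<longleftrightarrow> feasible n m alpha X q \<and>
      (\<forall>s. feasible n m alpha X s \<longrightarrow> entropy n m s \<le> entropy n m q)"

lemma is_maxent_support:
  assumes q: "is_maxent n m alpha X q" and s: "feasible n m alpha X s"
    and D0: "D0 \<in> matrices n m" "s D0 > 0"
  shows "q D0 > 0"
proof (rule ccontr)
  let ?S = "matrices n m"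
  have fq: "feasible n m alpha X q" using q by (simp add: is_maxent_def)
  assume "\<not> q D0 > 0"
  with feasible_nonneg[OF fq D0(1)] have "q D0 = 0" by simp
  define \<sigma> where "\<sigma> = (\<Sum>D\<in>{D\<in>?S. q D = 0}. s D)"
  have "s D0 \<le> \<sigma>" unfolding \<sigma>_def
    using \<open>q D0 = 0\<close> D0 feasible_nonneg[OF s] finite_matrices by (intro member_le_sum) auto
  with D0 have \<sigma>: "\<sigma> > 0" by simp
  have "entropy n m s \<le> entropy n m q" using q s by (simp add: is_maxent_def)
  \<comment> \<open>chosen so that the gain \<open>-t ln t \<sigma>\<close> of the segment lemma beats the loss by t\<close>
  define t where "t = exp ((entropy n m s - entropy n m q - 1) / \<sigma>)"
  have t: "0 < t" "t < 1" using \<sigma> \<open>entropy n m s \<le> entropy n m q\<close>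
    by (auto simp: t_def divide_neg_pos)
  have ln_t: "t * ln t * \<sigma> = t * (entropy n m s - entropy n m q - 1)"
    using \<sigma> by (simp add: t_def)
  define r where "r = (\<lambda>D. q D + t * (s D - q D))"
  have "\<forall>D\<in>?S. 0 \<le> r D"
  proof
    fix D assume "D \<in> ?S"
    then have "0 \<le> (1 - t) * q D + t * s D"
      using feasible_nonneg[OF fq] feasible_nonneg[OF s] t by simp
    then show "0 \<le> r D" by (simp add: r_def algebra_simps)
  qed
  then have "feasible n m alpha X r" unfolding r_def by (rule feasible_affine_combination[OF fq s])
  then have "entropy n m r \<le> entropy n m q" using q by (simp add: is_maxent_def)
  moreover have "entropy n m q + t \<le> entropy n m r"
    using entropy_segment_ge[of n m q s t] feasible_nonneg[OF fq] feasible_nonneg[OF s] t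
    unfolding r_def \<sigma>_def[symmetric] ln_t by (simp add: algebra_simps)
  ultimately show False using t by simp
qed

text \<open>First-order optimality at the maximiser; the support lemma makes every segment towards
  a feasible s extend slightly beyond the maximiser, so the derivative must vanish.\<close>

lemma is_maxent_cross_entropy:
  assumes q: "is_maxent n m alpha X q" and s: "feasible n m alpha X s"
  shows "(\<Sum>D\<in>matrices n m. s D * ln (q D)) = (\<Sum>D\<in>matrices n m. q D * ln (q D))"
proof -
  let ?S = "matrices n m"
  let ?r = "\<lambda>t D. q D + t * (s D - q D)"
  have fq: "feasible n m alpha X q" using q by (simp add: is_maxent_def)
  have support: "0 < q D \<or> s D - q D = 0" if "D \<in> ?S" for D
    using that is_maxent_support[OF q s, of D] feasible_nonneg[OF fq] feasible_nonneg[OF s]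
    by (metis diff_self less_eq_real_def)
  obtain \<delta> where \<delta>: "\<delta> > 0" and nonneg: "\<And>t D. \<bar>t\<bar> < \<delta> \<Longrightarrow> D \<in> ?S \<Longrightarrow> 0 \<le> ?r t D"
    using small_perturbation_nonneg[OF finite_matrices, where q=q and s=s] support feasible_nonneg[OF fq]
    by (metis diff_zero mult_zero_right not_less_iff_gr_or_eq)
  have local_max: "\<forall>t. \<bar>0 - t\<bar> < \<delta> \<longrightarrow> entropy n m (?r t) \<le> entropy n m (?r 0)"
    using q nonneg feasible_affine_combination[OF fq s] by (simp add: is_maxent_def)
  have "((\<lambda>t. entropy n m (?r t)) has_real_derivative
      - (\<Sum>D\<in>?S. (ln (q D) + 1) * (s D - q D))) (at 0)"
    unfolding entropy_def
    by (intro DERIV_minus DERIV_sum xlnx_line_has_real_derivative support)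
  from DERIV_local_max[OF this \<delta> local_max]
  have "(\<Sum>D\<in>?S. (ln (q D) + 1) * (s D - q D)) = 0" by simp
  moreover have "(\<Sum>D\<in>?S. (ln (q D) + 1) * (s D - q D)) =
      (\<Sum>D\<in>?S. s D * ln (q D)) - (\<Sum>D\<in>?S. q D * ln (q D)) + ((\<Sum>D\<in>?S. s D) - (\<Sum>D\<in>?S. q D))"
    by (simp add: algebra_simps sum.distrib sum_subtractf)
  ultimately show ?thesis using feasible_sum[OF fq] feasible_sum[OF s] by simp
qed

lemma is_maxent_unique:
  assumes q1: "is_maxent n m alpha X q1" and q2: "is_maxent n m alpha X q2"
  shows "q1 = q2"
proof
  let ?S = "matrices n m"
  let ?d = "\<lambda>D. (q1 D - q2 D) * (ln (q1 D) - ln (q2 D))"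
  have f1: "feasible n m alpha X q1" and f2: "feasible n m alpha X q2"
    using q1 q2 by (auto simp: is_maxent_def)
  have same_support: "0 \<le> q1 D" "0 \<le> q2 D" "q1 D > 0 \<longleftrightarrow> q2 D > 0" if "D \<in> ?S" for D
    using that is_maxent_support[OF q1 f2] is_maxent_support[OF q2 f1]
      feasible_nonneg[OF f1] feasible_nonneg[OF f2] by auto
  have d_nonneg: "0 \<le> ?d D" if "D \<in> ?S" for D
    using same_support[OF that] diff_mult_ln_diff_pos[of "q1 D" "q2 D"]
    by (cases "q1 D = q2 D") auto
  have "entropy n m q1 = entropy n m q2"
    using q1 q2 f1 f2 unfolding is_maxent_def by (meson order_antisym)
  moreover have "(\<Sum>D\<in>?S. ?d D) =
     (\<Sum>D\<in>?S. q1 D * ln (q1 D)) - (\<Sum>D\<in>?S. q1 D * ln (q2 D))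
       - (\<Sum>D\<in>?S. q2 D * ln (q1 D)) + (\<Sum>D\<in>?S. q2 D * ln (q2 D))"
    by (simp add: algebra_simps sum.distrib sum_subtractf)
  ultimately have "(\<Sum>D\<in>?S. ?d D) = 0"
    using is_maxent_cross_entropy[OF q1 f2] is_maxent_cross_entropy[OF q2 f1]
    by (simp add: entropy_def)
  then have d_zero: "\<forall>D\<in>?S. ?d D = 0"
    using sum_nonneg_eq_0_iff[OF finite_matrices d_nonneg] by simp
  fix D
  show "q1 D = q2 D"
  proof (cases "D \<in> ?S")
    case True
    with d_zero have "?d D = 0" by blast
    then show ?thesis using same_support[OF True] diff_mult_ln_diff_pos[of "q1 D" "q2 D"]
      by (cases "q1 D > 0") auto
  qed (simp add: feasible_outside[OF f1] feasible_outside[OF f2])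
qed

lemma compact_feasible: "compact {p. feasible n m alpha X p}"
proof -
  let ?S = "matrices n m"
  let ?F = "{p. feasible n m alpha X p}"
  define Y where "Y = (\<lambda>D. if D \<in> ?S then {0..1::real} else {0})"
  have "compactin (product_topology (\<lambda>i. euclidean) UNIV) (PiE UNIV Y)"
    unfolding compactin_PiE Y_def by auto
  then have box: "compact (PiE UNIV Y)" by (simp add: euclidean_product_topology)
  have "?F = (\<Inter>D\<in>?S. {p. 0 \<le> p D}) \<inter> (\<Inter>D\<in>-?S. {p. p D = 0}) \<inter> {p. (\<Sum>D\<in>?S. p D) = 1}
       \<inter> (\<Inter>T\<in>X. {p. fr_distr n m T p = alpha T})"
    by (auto simp: feasible_def is_distr_def)
  moreover have "closed {p. fr_distr n m T p = alpha T}" for T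
    unfolding fr_distr_def by (intro closed_Collect_eq continuous_intros) auto
  moreover have "closed {p::matrix \<Rightarrow> real. 0 \<le> p D}" for D
    by (intro closed_Collect_le) auto
  moreover have "closed {p::matrix \<Rightarrow> real. p D = 0}" for D
    by (intro closed_Collect_eq) auto
  moreover have "closed {p::matrix \<Rightarrow> real. (\<Sum>D\<in>?S. p D) = 1}"
    by (intro closed_Collect_eq continuous_intros) auto
  ultimately have "closed ?F" by (auto intro!: closed_Int closed_INT)
  moreover have "?F \<subseteq> PiE UNIV Y"
  proof (intro subsetI PiE_I)
    fix p D assume "p \<in> ?F"
    then have fp: "feasible n m alpha X p" by simp
    show "p D \<in> Y D"
    proof (cases "D \<in> ?S")
      case True
      have "p D \<le> (\<Sum>D\<in>?S. p D)"
        using True finite_matrices feasible_nonneg[OF fp] by (intro member_le_sum) auto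
      then show ?thesis using True feasible_sum[OF fp] feasible_nonneg[OF fp True] by (simp add: Y_def)
    qed (simp add: Y_def feasible_outside[OF fp])
  qed simp
  ultimately show ?thesis using compact_Int_closed[OF box, of ?F] by (simp add: Int_absorb1)
qed

lemma continuous_on_entropy:
  "continuous_on {p. \<forall>D\<in>matrices n m. 0 \<le> p D} (entropy n m)"
proof -
  let ?P = "{p :: matrix \<Rightarrow> real. \<forall>D\<in>matrices n m. 0 \<le> p D}"
  have "continuous_on ?P (\<lambda>p. p D * ln (p D))" if "D \<in> matrices n m" for D
  proof (rule continuous_on_compose2[OF continuous_on_xlnx, of ?P "\<lambda>p. p D"])
    have "continuous_on UNIV (\<lambda>p::matrix \<Rightarrow> real. p D)" by simp
    then show "continuous_on ?P (\<lambda>p. p D)" by (rule continuous_on_subset) simp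
  qed (use that in auto)
  then show ?thesis unfolding entropy_def[abs_def]
    by (intro continuous_on_minus continuous_on_sum) auto
qed

lemma is_maxent_exists:
  assumes "consistent n m alpha X"
  obtains q where "is_maxent n m alpha X q"
proof -
  let ?F = "{p. feasible n m alpha X p}"
  have "?F \<noteq> {}" using assms by (auto simp: consistent_def)
  moreover have "continuous_on ?F (entropy n m)"
    using feasible_nonneg by (blast intro: continuous_on_subset[OF continuous_on_entropy])
  ultimately obtain q where "q \<in> ?F" "\<forall>s\<in>?F. entropy n m s \<le> entropy n m q"
    using continuous_attains_sup[OF compact_feasible] by blast
  then show ?thesis using that unfolding is_maxent_def by auto
qed

lemma is_maxent_maxent:
  assumes "consistent n m alpha X"
  shows "is_maxent n m alpha X (maxent n m alpha X)"
proof -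
  have "\<exists>!q. is_maxent n m alpha X q"
    using is_maxent_exists[OF assms] is_maxent_unique by metis
  then show ?thesis unfolding maxent_def is_maxent_def[symmetric] by (rule theI')
qed

lemma entropy_maxent_antimono:
  assumes M: "consistent n m alpha M" and "X \<subseteq> Y" "Y \<subseteq> M"
  shows "entropy n m (maxent n m alpha Y) \<le> entropy n m (maxent n m alpha X)"
proof -
  have "is_maxent n m alpha Y (maxent n m alpha Y)"
    using assms by (intro is_maxent_maxent consistent_mono[OF M])
  then have "feasible n m alpha X (maxent n m alpha Y)"
    using \<open>X \<subseteq> Y\<close> feasible_mono by (auto simp: is_maxent_def)
  moreover have "is_maxent n m alpha X (maxent n m alpha X)"
    using assms by (intro is_maxent_maxent consistent_mono[OF M]) auto
  ultimately show ?thesis by (auto simp: is_maxent_def)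
qed

lemma KL_tiles_eq_entropy_diff:
  assumes M: "consistent n m alpha M" and XM: "X \<subseteq> M"
  shows "KL_tiles n m alpha M X = entropy n m (maxent n m alpha X) - entropy n m (maxent n m alpha M)"
proof -
  let ?S = "matrices n m"
  define p where "p = maxent n m alpha M"
  define q where "q = maxent n m alpha X"
  have "is_maxent n m alpha M p" unfolding p_def by (rule is_maxent_maxent[OF M])
  then have fp: "feasible n m alpha X p" using XM feasible_mono by (auto simp: is_maxent_def)
  have q: "is_maxent n m alpha X q" unfolding q_def by (rule is_maxent_maxent[OF consistent_mono[OF M XM]])
  have "p D * ln (p D / q D) = p D * ln (p D) - p D * ln (q D)" if D: "D \<in> ?S" for D
  proof (cases "p D = 0")
    case False
    then have "p D > 0" using feasible_nonneg[OF fp D] by simp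
    with is_maxent_support[OF q fp D] show ?thesis by (simp add: ln_div algebra_simps)
  qed simp
  then have "(\<Sum>D\<in>?S. p D * ln (p D / q D)) = (\<Sum>D\<in>?S. p D * ln (p D)) - (\<Sum>D\<in>?S. p D * ln (q D))"
    by (simp add: sum_subtractf)
  also have "\<dots> = (\<Sum>D\<in>?S. p D * ln (p D)) - (\<Sum>D\<in>?S. q D * ln (q D))"
    using is_maxent_cross_entropy[OF q fp] by simp
  finally show ?thesis unfolding KL_tiles_def KL_def entropy_def p_def q_def by simp
qed

lemma KL_tiles_antimono:
  assumes M: "consistent n m alpha M" and "X \<subseteq> Y" "Y \<subseteq> M"
  shows "KL_tiles n m alpha M Y \<le> KL_tiles n m alpha M X"
  using assms KL_tiles_eq_entropy_diff[OF M] entropy_maxent_antimono[OF M] by auto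

lemma KL_tiles_nonneg:
  assumes M: "consistent n m alpha M" and "X \<subseteq> M"
  shows "0 \<le> KL_tiles n m alpha M X"
  using KL_tiles_antimono[OF assms order_refl] KL_tiles_eq_entropy_diff[OF M order_refl] by simp

theorem theorem9:
  fixes n m :: nat and alpha :: "tile \<Rightarrow> real" and TS US BS :: "tile set" and U :: tile
  assumes "n \<ge> 1" and "m \<ge> 1"
    and "\<forall>T\<in>TS \<union> US \<union> BS. is_tile n m T"
    and "consistent n m alpha (TS \<union> US \<union> BS)"
    and "U \<in> US"
  shows "dist_d n m alpha (insert U TS) US BS \<le> dist_d n m alpha TS US BS"
proof -
  define M where "M = TS \<union> US \<union> BS"
  have M: "consistent n m alpha M" using assms(4) by (simp add: M_def)
  have same_M: "insert U TS \<union> US \<union> BS = M" using \<open>U \<in> US\<close> by (auto simp: M_def)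
  let ?K = "KL_tiles n m alpha M"
  have "?K (insert U TS \<union> BS) \<le> ?K (TS \<union> BS)"
    using \<open>U \<in> US\<close> by (intro KL_tiles_antimono[OF M]) (auto simp: M_def)
  moreover have "0 \<le> ?K BS" by (rule KL_tiles_nonneg[OF M]) (auto simp: M_def)
  ultimately show ?thesis
    unfolding dist_d_def Let_def same_M M_def[symmetric]
    by (auto intro: divide_right_mono)
qed

end
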